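(* Suppose $F,\tilde F\in Sh^{s,0}_{\Lambda_L}(X)\cap Mod(X)$ are related by an exact sequence of one of the forms (1) $0\to\tilde F\to F\to\mathcal{L}_X\to0$, or (2) $0\to\mathcal{L}_X\to F\to\tilde F\to0$, with $\mathcal{L}_X\in loc(X)$. Then a local trivialization $f=(f_1,\dots,f_r)$ of $F$ induces a local trivialization $\tilde f=(\tilde f_1,\dots,\tilde f_r)$ of $\tilde F$ (in case (1) by restriction $\tilde f_s=f_s|_{\tilde V}$, in case (2) by passing to the quotient $\tilde V=V/V_0$, where $V_0\subset V$ is the stalk of $\mathcal{L}_X$), and $\epsilon_{(F,f)}=\epsilon_{(\tilde F,\tilde f)}$.
   Context: $X=\mathbb{R}^3$ or $S^3$, $k$ a field, $(L,L')$ an $r$-component framed oriented link, $L=K_1\sqcup\dots\sqcup K_r$; $loc(X)$ denotes locally constant sheaves on $X$. Sheaves in $Sh^{s,0}_{\Lambda_L}(X)\cap Mod(X)$ (sheaves of $k$-vector spaces with micro-support at infinity in the unit conormal of $L$, microlocally simple with Morse cone in degree $0$) are equivalent to data $(V,\rho,W_s,\rho_s,T_s)$: $\rho:\pi_1(X\setminus L)\to GL(V)$ the local system on the complement, $W_s$ the stalk on $K_s$, $T_s:W_s\to V$ the injective restriction map with one-dimensional cokernel, the meridian of $K_s$ acting trivially on its image and the longitude action intertwining with the monodromy of $K_s$; we view $W_s\subset V$. $A_c$ denotes trivialized parallel transport along a path $c$, $M_t=\rho(m_t)$. A local trivialization is an $r$-tuple of surjective linear maps $f_s:V\to k$ with $f_s|_{W_s}=0$.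 $\epsilon_{(F,f)}$ is the augmentation of the framed cord algebra $\mathrm{Cord}(L)$ given on generators by $\epsilon(c_{st})=f_sA_{c_{st}}(\mathrm{id}_V-M_t)f_t^{-1}$ for framed cords $c_{st}$ from the framing curve of $K_s$ to that of $K_t$, $\epsilon(\lambda_s)=f_sA_{\ell_s}f_s^{-1}$ ($\ell_s$ the longitude loop), $\epsilon(\mu_s)=1-f_s(\mathrm{id}_V-M_s)f_s^{-1}$, where $f_s^{-1}$ is any right inverse of $f_s$. *)

theory Defs
  imports Complex_Main "HOL-Algebra.Group"
begin

text \<open>
Abstract (combinatorial) model of sheaves in Sh^{s,0}_{Lambda_L}(X) \<inter> Mod(X), via the data
(V, rho, W_s, rho_s, T_s) of the paper.  The fundamental group of the link complement is an
abstract group G; m s and l s are the meridian and (framing) longitude of the component K_s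
(s < r).  The stalk V on the complement is the whole type 'v, a vector space over the field
'k with scalar multiplication sc; the stalks W s on K_s are viewed as subspaces of V
(T_s being the inclusion).  Trivialised parallel transport along a path (cord, longitude)
is rho g for the corresponding element g of G.
\<close>

definition rep :: "('g, 'b) monoid_scheme \<Rightarrow> ('k::field \<Rightarrow> 'v::ab_group_add \<Rightarrow> 'v)
    \<Rightarrow> ('g \<Rightarrow> 'v \<Rightarrow> 'v) \<Rightarrow> bool" where
  "rep G sc \<rho> \<longleftrightarrow> Vector_Spaces.vector_space sc \<and>
     (\<forall>g\<in>carrier G. Vector_Spaces.linear sc sc (\<rho> g)) \<and>
     \<rho> \<one>\<^bsub>G\<^esub> = id \<and>
     (\<forall>g\<in>carrier G. \<forall>h\<in>carrier G. \<rho> (g \<otimes>\<^bsub>G\<^esub> h) = \<rho> g \<circ> \<rho> h)"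

text \<open>Object of Sh^{s,0}_{Lambda_L}(X) \<inter> Mod(X): W s is a subspace of V with
one-dimensional cokernel, the meridian of K_s acts trivially on W s, and the longitude action
preserves W s (so that it intertwines with the monodromy of K_s, namely its restriction).\<close>

definition sheaf_datum :: "('g, 'b) monoid_scheme \<Rightarrow> nat \<Rightarrow> ('k::field \<Rightarrow> 'v::ab_group_add \<Rightarrow> 'v)
    \<Rightarrow> ('g \<Rightarrow> 'v \<Rightarrow> 'v) \<Rightarrow> (nat \<Rightarrow> 'g) \<Rightarrow> (nat \<Rightarrow> 'g) \<Rightarrow> (nat \<Rightarrow> 'v set) \<Rightarrow> bool" where
  "sheaf_datum G r sc \<rho> m l W \<longleftrightarrow> rep G sc \<rho> \<and>
     (\<forall>s<r. module.subspace sc (W s) \<and>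
        (\<exists>v. v \<notin> W s \<and> (\<forall>x. \<exists>c. x - sc c v \<in> W s)) \<and>
        (\<forall>w\<in>W s. \<rho> (m s) w = w) \<and>
        (\<forall>w\<in>W s. \<rho> (l s) w \<in> W s))"

definition local_triv :: "nat \<Rightarrow> ('k::field \<Rightarrow> 'v::ab_group_add \<Rightarrow> 'v) \<Rightarrow> (nat \<Rightarrow> 'v set)
    \<Rightarrow> (nat \<Rightarrow> 'v \<Rightarrow> 'k) \<Rightarrow> bool" where
  "local_triv r sc W f \<longleftrightarrow>
     (\<forall>s<r. Vector_Spaces.linear sc ((*)) (f s) \<and> surj (f s) \<and> (\<forall>w\<in>W s. f s w = 0))"

text \<open>Generators of the framed cord algebra: framed cords c_st (their trivialised parallel
transport being given by an element of G), longitudes lambda_s, meridians mu_s.\<close>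

datatype 'g cord_gen = Cord nat nat 'g | Lam nat | Mu nat

definition cord_gens :: "('g, 'b) monoid_scheme \<Rightarrow> nat \<Rightarrow> 'g cord_gen set" where
  "cord_gens G r = {Cord s t g | s t g. s < r \<and> t < r \<and> g \<in> carrier G}
                   \<union> {Lam s | s. s < r} \<union> {Mu s | s. s < r}"

definition rinv :: "(nat \<Rightarrow> 'v \<Rightarrow> 'k::field) \<Rightarrow> nat \<Rightarrow> 'v" where
  "rinv f s = (SOME v. f s v = 1)"

text \<open>The augmentation epsilon_(F,f) on generators (a map k \<rightarrow> k identified with its value at 1).\<close>

fun aug :: "('g \<Rightarrow> 'v::ab_group_add \<Rightarrow> 'v) \<Rightarrow> (nat \<Rightarrow> 'g) \<Rightarrow> (nat \<Rightarrow> 'g)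
    \<Rightarrow> (nat \<Rightarrow> 'v \<Rightarrow> 'k::field) \<Rightarrow> 'g cord_gen \<Rightarrow> 'k" where
  "aug \<rho> m l f (Cord s t g) = f s (\<rho> g (rinv f t - \<rho> (m t) (rinv f t)))"
| "aug \<rho> m l f (Lam s) = f s (\<rho> (l s) (rinv f s))"
| "aug \<rho> m l f (Mu s) = 1 - f s (rinv f s - \<rho> (m s) (rinv f s))"

end

theory Submission
  imports Defs
begin

text \<open>
  The kernel of f_t is exactly W_t, which the meridian fixes pointwise and the longitude
  preserves. Hence v - M_t v and f_t (A_l v) only depend on f_t v, so the augmentation may be
  computed with any preimage of 1 instead of the chosen right inverse. A linear map h that
  intertwines the two monodromies and satisfies f_s o h = f'_s sends preimages of 1 under f'_t
  to preimages of 1 under f_t, and therefore identifies the two augmentations. In case (1) h is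
  the inclusion of the stalk of the subsheaf, in case (2) the projection onto the quotient.
\<close>

lemmas linear_map_add = module_hom.add[OF module_hom_linearI]
  and linear_map_scale = module_hom.scale[OF module_hom_linearI]
  and linear_map_diff = module_hom.diff[OF module_hom_linearI]

lemma functional_zero_imp_mem_hyperplane:
  assumes lin: "Vector_Spaces.linear sc (*) \<phi>" and "surj \<phi>"
    and vanish: "\<forall>w\<in>H. \<phi> w = 0" and codim1: "\<forall>x. \<exists>c. x - sc c v \<in> H"
    and "\<phi> x = 0"
  shows "x \<in> H"
proof -
  have on_line: "\<phi> y = c * \<phi> v" if "y - sc c v \<in> H" for y c
    using vanish that linear_map_diff[OF lin] linear_map_scale[OF lin] by fastforce
  have "\<phi> v \<noteq> 0"
  proof
    assume "\<phi> v = 0"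
    obtain y where "\<phi> y = 1" using \<open>surj \<phi>\<close> by (metis surjD)
    with codim1 on_line \<open>\<phi> v = 0\<close> show False by force
  qed
  obtain c where c: "x - sc c v \<in> H" using codim1 by blast
  with on_line \<open>\<phi> x = 0\<close> \<open>\<phi> v \<noteq> 0\<close> have "c = 0" by force
  moreover have "module sc"
    using lin by (simp add: Vector_Spaces.linear_iff module_iff_vector_space)
  ultimately show ?thesis using c module.scale_zero_left by force
qed

lemma local_triv_kernel:
  assumes "sheaf_datum G r sc \<rho> m l W" and "local_triv r sc W f" and "t < r" and "f t x = 0"
  shows "x \<in> W t"
  using assms unfolding sheaf_datum_def local_triv_def
  by (metis functional_zero_imp_mem_hyperplane)

lemma local_triv_rinv:
  assumes "local_triv r sc W f" and "t < r"
  shows "f t (rinv f t) = 1"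
proof -
  obtain v where "f t v = 1" using assms unfolding local_triv_def by (metis surjD)
  then show ?thesis unfolding rinv_def by (rule someI)
qed

lemma local_triv_value_determines_monodromy:
  assumes F: "sheaf_datum G r sc \<rho> m l W" and f: "local_triv r sc W f" and t: "t < r"
    and ml: "m t \<in> carrier G" "l t \<in> carrier G" and eq: "f t v = f t v'"
  shows "v - \<rho> (m t) v = v' - \<rho> (m t) v'"
    and "f t (\<rho> (l t) v) = f t (\<rho> (l t) v')"
proof -
  have lin_f: "Vector_Spaces.linear sc (*) (f t)" and vanish: "\<forall>w\<in>W t. f t w = 0"
    using f t unfolding local_triv_def by auto
  have lin_\<rho>: "Vector_Spaces.linear sc sc (\<rho> g)" if "g \<in> carrier G" for g
    using F that unfolding sheaf_datum_def rep_def by blast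
  have "v - v' \<in> W t"
    using local_triv_kernel[OF F f t] eq linear_map_diff[OF lin_f] by simp
  moreover have "\<rho> (m t) w = w" "\<rho> (l t) w \<in> W t" if "w \<in> W t" for w
    using F t that unfolding sheaf_datum_def by blast+
  ultimately have "\<rho> (m t) (v - v') = v - v'" and "f t (\<rho> (l t) (v - v')) = 0"
    using vanish by auto
  then show "v - \<rho> (m t) v = v' - \<rho> (m t) v'"
    and "f t (\<rho> (l t) v) = f t (\<rho> (l t) v')"
    using linear_map_diff[OF lin_\<rho>[OF ml(1)]] linear_map_diff[OF lin_\<rho>[OF ml(2)]]
      linear_map_diff[OF lin_f] by (simp_all add: algebra_simps)
qed

lemma aug_eq_of_intertwiner:
  assumes ml: "\<forall>s<r. m s \<in> carrier G \<and> l s \<in> carrier G"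
    and F: "sheaf_datum G r sc \<rho> m l W" and f: "local_triv r sc W f"
    and f': "local_triv r sc' W' f'"
    and h: "Vector_Spaces.linear sc' sc h"
    and intertwines: "\<forall>g\<in>carrier G. \<forall>x. h (\<rho>' g x) = \<rho> g (h x)"
    and compat: "\<forall>s<r. \<forall>x. f s (h x) = f' s x"
  shows "\<forall>x\<in>cord_gens G r. aug \<rho>' m l f' x = aug \<rho> m l f x"
proof
  fix x assume x: "x \<in> cord_gens G r"
  have defect: "h (rinv f' t - \<rho>' (m t) (rinv f' t)) = rinv f t - \<rho> (m t) (rinv f t)"
    and longitude: "f t (h (\<rho>' (l t) (rinv f' t))) = f t (\<rho> (l t) (rinv f t))"
    if t: "t < r" for t
  proof -
    have "f t (h (rinv f' t)) = f t (rinv f t)"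
      using compat local_triv_rinv[OF f' t] local_triv_rinv[OF f t] t by simp
    note same = local_triv_value_determines_monodromy[OF F f t _ _ this]
    show "h (rinv f' t - \<rho>' (m t) (rinv f' t)) = rinv f t - \<rho> (m t) (rinv f t)"
      using same(1) ml t intertwines linear_map_diff[OF h] by simp
    show "f t (h (\<rho>' (l t) (rinv f' t))) = f t (\<rho> (l t) (rinv f t))"
      using same(2) ml t intertwines by simp
  qed
  from x show "aug \<rho>' m l f' x = aug \<rho> m l f x"
    unfolding cord_gens_def
  proof (elim UnE CollectE exE conjE)
    fix s t g assume "x = Cord s t g" "s < r" "t < r" "g \<in> carrier G"
    then show ?thesis using intertwines defect[of t] by (simp flip: compat)
  next
    fix s assume "x = Lam s" "s < r"
    then show ?thesis using longitude[of s] by (simp flip: compat)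
  next
    fix s assume "x = Mu s" "s < r"
    then show ?thesis using defect[of s] by (simp flip: compat)
  qed
qed

lemma local_triv_restrict:
  assumes f: "local_triv r sc W f"
    and i: "Vector_Spaces.linear sc' sc i" and q: "Vector_Spaces.linear sc scq q"
    and exact: "range i = {v. q v = 0}"
    and stalks: "\<forall>s<r. i ` W' s \<subseteq> W s \<and> q ` W s = UNIV"
  shows "local_triv r sc' W' (\<lambda>s. f s \<circ> i)"
  unfolding local_triv_def
proof (intro allI impI conjI)
  fix s assume s: "s < r"
  have lin_f: "Vector_Spaces.linear sc (*) (f s)" and "surj (f s)" and vanish: "\<forall>w\<in>W s. f s w = 0"
    using f s unfolding local_triv_def by auto
  show "Vector_Spaces.linear sc' (*) (f s \<circ> i)"
    using i lin_f by (rule Vector_Spaces.linear_compose)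
  have "range (f s) \<subseteq> range (f s \<circ> i)"
  proof (rule image_subsetI)
    fix v
    have "q v \<in> q ` W s" using stalks s by simp
    then obtain w where w: "w \<in> W s" "q w = q v" by (auto simp: image_iff)
    then have "v - w \<in> range i"
      using exact linear_map_diff[OF q] by simp
    then obtain y where "i y = v - w" by auto
    then have "(f s \<circ> i) y = f s v"
      using w vanish linear_map_diff[OF lin_f] by simp
    then show "f s v \<in> range (f s \<circ> i)" by (metis rangeI)
  qed
  with \<open>surj (f s)\<close> show "surj (f s \<circ> i)" by auto
  show "\<forall>w\<in>W' s. (f s \<circ> i) w = 0"
    using stalks s vanish by auto
qed

lemma linear_factor_through_surj:
  assumes \<phi>: "Vector_Spaces.linear s1 s3 \<phi>" and p: "Vector_Spaces.linear s1 s2 p" and "surj p"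
    and factor: "\<forall>v. \<psi> (p v) = \<phi> v"
  shows "Vector_Spaces.linear s2 s3 \<psi>"
  unfolding Vector_Spaces.linear_iff
proof (intro conjI allI)
  show "Vector_Spaces.vector_space s2" "Vector_Spaces.vector_space s3"
    using \<phi> p by (simp_all add: Vector_Spaces.linear_iff)
  fix x y c
  obtain a b where ab: "x = p a" "y = p b" using \<open>surj p\<close> by (metis surjD)
  show "\<psi> (x + y) = \<psi> x + \<psi> y"
    using factor linear_map_add[OF p] linear_map_add[OF \<phi>] by (simp add: ab flip: factor)
  show "\<psi> (s2 c x) = s3 c (\<psi> x)"
    using factor linear_map_scale[OF p] linear_map_scale[OF \<phi>] by (simp add: ab flip: factor)
qed

lemma ex_factor_through_quotient:
  assumes f: "local_triv r sc W f"
    and p: "Vector_Spaces.linear sc sc' p" and kernel: "\<forall>s<r. {v. p v = 0} \<subseteq> W s"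
  shows "\<exists>f'. \<forall>s<r. \<forall>v. f' s (p v) = f s v"
proof (intro exI[of _ "\<lambda>s w. f s (SOME u. p u = w)"] allI impI)
  fix s v assume s: "s < r"
  let ?u = "SOME u. p u = p v"
  have "p ?u = p v" by (rule someI) (rule refl)
  then have "p (?u - v) = 0" using linear_map_diff[OF p] by simp
  then have "?u - v \<in> W s" using kernel s by blast
  moreover have "Vector_Spaces.linear sc (*) (f s)" "\<forall>w\<in>W s. f s w = 0"
    using f s unfolding local_triv_def by auto
  ultimately show "f s ?u = f s v"
    using linear_map_diff by fastforce
qed

lemma local_triv_quotient:
  assumes f: "local_triv r sc W f"
    and p: "Vector_Spaces.linear sc sc' p" "surj p" and stalks: "\<forall>s<r. p ` W s = W' s"
    and factor: "\<forall>s<r. \<forall>v. f' s (p v) = f s v"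
  shows "local_triv r sc' W' f'"
  unfolding local_triv_def
proof (intro allI impI conjI)
  fix s assume s: "s < r"
  have lin_f: "Vector_Spaces.linear sc (*) (f s)" and "surj (f s)" and vanish: "\<forall>w\<in>W s. f s w = 0"
    using f s unfolding local_triv_def by auto
  show "Vector_Spaces.linear sc' (*) (f' s)"
    using lin_f p factor s by (blast intro: linear_factor_through_surj)
  show "surj (f' s)"
    using \<open>surj (f s)\<close> factor s by (metis surj_def)
  show "\<forall>w\<in>W' s. f' s w = 0"
    using stalks[rule_format, OF s, symmetric] factor s vanish by auto
qed

lemma restriction_preserves_aug:
  assumes ml: "\<forall>s<r. m s \<in> carrier G \<and> l s \<in> carrier G"
    and F: "sheaf_datum G r sc \<rho> m l W" and f: "local_triv r sc W f"
    and i: "Vector_Spaces.linear sc' sc i" and q: "Vector_Spaces.linear sc scq q"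
    and exact: "range i = {v. q v = 0}"
    and intertwines: "\<forall>g\<in>carrier G. \<forall>x. i (\<rho>' g x) = \<rho> g (i x)"
    and stalks: "\<forall>s<r. i ` W' s \<subseteq> W s \<and> q ` W s = UNIV"
  shows "local_triv r sc' W' (\<lambda>s. f s \<circ> i) \<and>
    (\<forall>x\<in>cord_gens G r. aug \<rho>' m l (\<lambda>s. f s \<circ> i) x = aug \<rho> m l f x)"
proof
  show triv: "local_triv r sc' W' (\<lambda>s. f s \<circ> i)"
    using f i q exact stalks by (rule local_triv_restrict)
  show "\<forall>x\<in>cord_gens G r. aug \<rho>' m l (\<lambda>s. f s \<circ> i) x = aug \<rho> m l f x"
    using aug_eq_of_intertwiner[OF ml F f triv i intertwines] by simp
qed

lemma quotient_preserves_aug: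
  assumes ml: "\<forall>s<r. m s \<in> carrier G \<and> l s \<in> carrier G"
    and F': "sheaf_datum G r sc' \<rho>' m l W'" and f: "local_triv r sc W f"
    and p: "Vector_Spaces.linear sc sc' p" "surj p"
    and intertwines: "\<forall>g\<in>carrier G. \<forall>v. p (\<rho> g v) = \<rho>' g (p v)"
    and stalks: "\<forall>s<r. p ` W s = W' s"
    and factor: "\<forall>s<r. \<forall>v. f' s (p v) = f s v"
  shows "local_triv r sc' W' f' \<and> (\<forall>x\<in>cord_gens G r. aug \<rho>' m l f' x = aug \<rho> m l f x)"
proof
  show triv: "local_triv r sc' W' f'"
    using f p stalks factor by (rule local_triv_quotient)
  show "\<forall>x\<in>cord_gens G r. aug \<rho>' m l f' x = aug \<rho> m l f x"
    using aug_eq_of_intertwiner[OF ml F' triv f p(1) intertwines factor] by simp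
qed

theorem proposition4p7:
  fixes G :: "('g, 'b) monoid_scheme" and r :: nat
    and m l :: "nat \<Rightarrow> 'g"
    and sc :: "'k::field \<Rightarrow> 'v::ab_group_add \<Rightarrow> 'v" and \<rho> :: "'g \<Rightarrow> 'v \<Rightarrow> 'v"
    and W :: "nat \<Rightarrow> 'v set"
    and sct :: "'k \<Rightarrow> 'w::ab_group_add \<Rightarrow> 'w" and \<rho>t :: "'g \<Rightarrow> 'w \<Rightarrow> 'w"
    and Wt :: "nat \<Rightarrow> 'w set"
    and scu :: "'k \<Rightarrow> 'u::ab_group_add \<Rightarrow> 'u"
    and f :: "nat \<Rightarrow> 'v \<Rightarrow> 'k"
  assumes G: "group G"
    and ml: "\<forall>s<r. m s \<in> carrier G \<and> l s \<in> carrier G \<and> m s \<otimes>\<^bsub>G\<^esub> l s = l s \<otimes>\<^bsub>G\<^esub> m s"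
    and F: "sheaf_datum G r sc \<rho> m l W"
    and Ft: "sheaf_datum G r sct \<rho>t m l Wt"
    and Lsp: "Vector_Spaces.vector_space scu"
    and f: "local_triv r sc W f"
  shows
    "(\<forall>(i :: 'w \<Rightarrow> 'v) (q :: 'v \<Rightarrow> 'u).
        Vector_Spaces.linear sct sc i \<and> inj i \<and> Vector_Spaces.linear sc scu q \<and> surj q \<and> range i = {v. q v = 0} \<and>
        (\<forall>g\<in>carrier G. \<forall>x. i (\<rho>t g x) = \<rho> g (i x)) \<and>
        (\<forall>g\<in>carrier G. \<forall>v. q (\<rho> g v) = q v) \<and>
        (\<forall>s<r. i ` Wt s \<subseteq> W s \<and> q ` W s = UNIV \<and> (\<forall>w\<in>W s. q w = 0 \<longrightarrow> w \<in> i ` Wt s))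
      \<longrightarrow> local_triv r sct Wt (\<lambda>s. f s \<circ> i) \<and>
          (\<forall>x\<in>cord_gens G r. aug \<rho>t m l (\<lambda>s. f s \<circ> i) x = aug \<rho> m l f x))
   \<and>
    (\<forall>(j :: 'u \<Rightarrow> 'v) (p :: 'v \<Rightarrow> 'w).
        Vector_Spaces.linear scu sc j \<and> inj j \<and> Vector_Spaces.linear sc sct p \<and> surj p \<and> range j = {v. p v = 0} \<and>
        (\<forall>g\<in>carrier G. \<forall>u. \<rho> g (j u) = j u) \<and>
        (\<forall>g\<in>carrier G. \<forall>v. p (\<rho> g v) = \<rho>t g (p v)) \<and>
        (\<forall>s<r. range j \<subseteq> W s \<and> p ` W s = Wt s)
      \<longrightarrow> (\<exists>ft. \<forall>s<r. \<forall>v. ft s (p v) = f s v) \<and>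
          (\<forall>ft. (\<forall>s<r. \<forall>v. ft s (p v) = f s v) \<longrightarrow>
             local_triv r sct Wt ft \<and>
             (\<forall>x\<in>cord_gens G r. aug \<rho>t m l ft x = aug \<rho> m l f x)))"
proof -
  have "\<forall>s<r. m s \<in> carrier G \<and> l s \<in> carrier G" using ml by blast
  \<comment> \<open>W' occurs only in premises of the second conjunct, where simp cannot instantiate it.\<close>
  note restriction = restriction_preserves_aug[OF this F f, where W' = Wt]
    and quotient = quotient_preserves_aug[OF this Ft f] ex_factor_through_quotient[OF f]
  show ?thesis
    by (intro conjI allI impI; elim conjE) (simp_all add: restriction quotient)
qed

end
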